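(* Let $X$ be a binomial random variable with parameters $(n,p)\in\mathbb{N}^*\times(0,1)$. (i) For $a\in(0,1]$, $\mathbb{E}\big[(2X+1)^{-a}\big]\le\big(1\wedge\frac{1}{p(n+1)}\big)^a$. (ii) Let $f\in\mathcal{C}((0,1])$ be locally Lipschitz continuous and $b\in(0,1)$. Then \[ \mathbb{E}\Big[\Big|f\Big(\frac{2X+1}{2n+1}\Big)-f(p)\Big|\Big]\le\frac{\operatorname{ess\,sup}_{x\in(0,1]}|x^bf'(x)|}{1-b}\big(p^{-b/2}+p^{\frac12-b}\big)\,n^{-1/2}. \] *)

theory Defs
  imports "HOL-Probability.Probability"
begin

definition locally_lipschitz_on :: "real set \<Rightarrow> (real \<Rightarrow> real) \<Rightarrow> bool" where
  "locally_lipschitz_on S f \<longleftrightarrow>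
     (\<forall>x\<in>S. \<exists>e>0. \<exists>L. L-lipschitz_on (cball x e \<inter> S) f)"

end

theory Submission
  imports Defs
begin

text \<open>
  (i) Since \<open>1 / (2X + 1) \<le> 1 / (X + 1)\<close> and \<open>E[1 / (X + 1)] = (1 - (1 - p)^(n+1)) / (p (n + 1))\<close>,
  the claim follows from Jensen's inequality for the concave map \<open>t \<mapsto> t^a\<close>, applied via its
  tangent line.

  (ii) The bound \<open>|x^b f'(x)| \<le> m\<close> makes \<open>\<plusminus>f\<close> grow no faster than the antiderivative
  \<open>m x^(1-b) / (1 - b)\<close> of \<open>m x^(-b)\<close>, so \<open>|f y - f x| \<le> m |y^(1-b) - x^(1-b)| / (1 - b)\<close>.
  As \<open>f'\<close> exists only almost everywhere, this comparison is proved by a crossing argument: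
  a locally Lipschitz map sends the null set of bad points to a null set of values, so a
  generic crossing level is attained only at good points. Concavity of \<open>x^(1-b)\<close> then gives
  \<open>|Y^(1-b) - p^(1-b)| \<le> p^(-b) |Y - p|\<close> for \<open>Y = (2X + 1) / (2n + 1)\<close>, and
  \<open>E|X - np| \<le> sqrt (np)\<close> finishes the estimate once the trivial bound \<open>1\<close> covers the case
  \<open>p^(-b/2) n^(-1/2) \<ge> 1\<close>.
\<close>

section \<open>Monotonicity from almost-everywhere derivatives\<close>

lemma nonincreasing_if_deriv_neg_off_negligible_image:
  fixes h :: "real \<Rightarrow> real"
  assumes "a \<le> b" and cont: "continuous_on {a..b} h"
    and neg: "negligible (h ` ({a<..<b} \<inter> N))"
    and deriv: "\<And>t. t \<in> {a<..<b} - N \<Longrightarrow> \<exists>D<0. (h has_real_derivative D) (at t)"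
  shows "h b \<le> h a"
proof (rule ccontr)
  assume "\<not> h b \<le> h a"
  then have hab: "h a < h b" by simp
  have "\<not> {h a<..<h b} \<subseteq> h ` ({a<..<b} \<inter> N)"
    using hab negligible_subset[OF neg] negligible_interval(2)[of "h a" "h b"] by auto
  then obtain v where v: "h a < v" "v < h b" "v \<notin> h ` ({a<..<b} \<inter> N)"
    by (meson greaterThanLessThan_iff subsetI)
  define K where "K = {a..b} \<inter> h -` {..v}"
  have "compact K"
    unfolding K_def compact_eq_bounded_closed
    by (intro conjI bounded_Int[OF disjI1] bounded_closed_interval
        continuous_closed_preimage[OF cont]) auto
  moreover have "a \<in> K" using \<open>a \<le> b\<close> v by (auto simp: K_def)
  ultimately obtain t where t: "t \<in> K" "\<And>s. s \<in> K \<Longrightarrow> s \<le> t"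
    using compact_attains_sup[of K] by auto
  \<comment> \<open>Since \<open>v\<close> is not a value taken on \<open>N\<close>,
      \<open>t\<close> lies outside \<open>N\<close>, and the negative derivative there contradicts maximality.\<close>
  have "a \<le> t" "t \<le> b" "h t \<le> v" using t(1) by (auto simp: K_def)
  have "continuous_on {t..b} h"
    using \<open>a \<le> t\<close> by (intro continuous_on_subset[OF cont]) auto
  then obtain s where s: "t \<le> s" "s \<le> b" "h s = v"
    using IVT'[of h t v b] \<open>h t \<le> v\<close> \<open>v < h b\<close> \<open>t \<le> b\<close> by auto
  then have "s \<in> K"
    using \<open>a \<le> t\<close> by (simp add: K_def)
  with t(2) s have "h t = v"
    by (metis order_antisym)
  then have "t \<in> {a<..<b} - N"
    using v \<open>a \<le> t\<close> \<open>t \<le> b\<close> by (auto simp: less_le)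
  then obtain D where "D < 0" "(h has_real_derivative D) (at t)"
    using deriv by blast
  then obtain d where d: "d > 0" "\<And>k. 0 < k \<Longrightarrow> k < d \<Longrightarrow> h (t + k) < h t"
    using DERIV_neg_dec_right by blast
  obtain k where "0 < k" "k < d" "k < b - t"
    using field_lbound_gt_zero[of d "b - t"] d(1) \<open>t \<in> {a<..<b} - N\<close> by auto
  then have "t + k \<in> K"
    using d(2)[of k] \<open>h t = v\<close> \<open>a \<le> t\<close> by (simp add: K_def)
  then show False
    using t(2) \<open>0 < k\<close> by fastforce
qed

lemma negligible_image_if_lipschitz_at:
  fixes h :: "real \<Rightarrow> real"
  assumes "negligible S" and "S \<subseteq> A"
    and lip: "\<And>t. t \<in> S \<Longrightarrow> \<exists>B. \<forall>\<^sub>F y in nhds t. y \<in> A \<longrightarrow> \<bar>h y - h t\<bar> \<le> B * \<bar>y - t\<bar>"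
  shows "negligible (h ` S)"
proof (rule negligible_locally_Lipschitz_image)
  fix t assume "t \<in> S"
  then obtain B where "\<forall>\<^sub>F y in nhds t. y \<in> A \<longrightarrow> \<bar>h y - h t\<bar> \<le> B * \<bar>y - t\<bar>"
    using lip by blast
  then obtain T where "open T" "t \<in> T" "\<forall>y\<in>T. y \<in> A \<longrightarrow> \<bar>h y - h t\<bar> \<le> B * \<bar>y - t\<bar>"
    unfolding eventually_nhds by blast
  then show "\<exists>T B. open T \<and> t \<in> T \<and> (\<forall>y \<in> S \<inter> T. norm (h y - h t) \<le> B * norm (y - t))"
    using \<open>S \<subseteq> A\<close> by (intro exI[of _ T] exI[of _ B]) auto
qed (use \<open>negligible S\<close> in auto)

lemma nonincreasing_if_ae_deriv_nonpos:
  fixes h :: "real \<Rightarrow> real"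
  assumes "a \<le> b" and cont: "continuous_on {a..b} h" and "negligible N"
    and deriv: "\<And>t. t \<in> {a<..<b} - N \<Longrightarrow> \<exists>D\<le>0. (h has_real_derivative D) (at t)"
    and lip: "\<And>t. t \<in> {a<..<b} \<inter> N \<Longrightarrow>
                \<exists>B. \<forall>\<^sub>F y in nhds t. y \<in> {a..b} \<longrightarrow> \<bar>h y - h t\<bar> \<le> B * \<bar>y - t\<bar>"
  shows "h b \<le> h a"
proof -
  \<comment> \<open>Tilting by \<open>- e * t\<close> makes the derivative strictly negative and keeps \<open>h\<close> Lipschitz at the
      points of \<open>N\<close>.\<close>
  have tilted: "h b - e * b \<le> h a - e * a" if "e > 0" for e
  proof (rule nonincreasing_if_deriv_neg_off_negligible_image[OF \<open>a \<le> b\<close>])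
    show "continuous_on {a..b} (\<lambda>t. h t - e * t)"
      by (intro continuous_intros cont)
    show "negligible ((\<lambda>t. h t - e * t) ` ({a<..<b} \<inter> N))"
    proof (rule negligible_image_if_lipschitz_at[where A = "{a..b}"])
      fix t assume "t \<in> {a<..<b} \<inter> N"
      then obtain B where "\<forall>\<^sub>F y in nhds t. y \<in> {a..b} \<longrightarrow> \<bar>h y - h t\<bar> \<le> B * \<bar>y - t\<bar>"
        using lip by blast
      then have "\<forall>\<^sub>F y in nhds t. y \<in> {a..b} \<longrightarrow>
          \<bar>(h y - e * y) - (h t - e * t)\<bar> \<le> (B + e) * \<bar>y - t\<bar>"
      proof (rule eventually_mono, intro impI)
        fix y assume "y \<in> {a..b} \<longrightarrow> \<bar>h y - h t\<bar> \<le> B * \<bar>y - t\<bar>" "y \<in> {a..b}"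
        moreover have "\<bar>(h y - e * y) - (h t - e * t)\<bar> = \<bar>(h y - h t) - e * (y - t)\<bar>"
          by (simp add: algebra_simps)
        moreover have "\<dots> \<le> \<bar>h y - h t\<bar> + e * \<bar>y - t\<bar>"
          using \<open>e > 0\<close> by (metis abs_mult abs_of_pos abs_triangle_ineq4)
        ultimately show "\<bar>(h y - e * y) - (h t - e * t)\<bar> \<le> (B + e) * \<bar>y - t\<bar>"
          by (simp add: algebra_simps)
      qed
      then show "\<exists>B. \<forall>\<^sub>F y in nhds t. y \<in> {a..b} \<longrightarrow>
          \<bar>(h y - e * y) - (h t - e * t)\<bar> \<le> B * \<bar>y - t\<bar>" ..
    qed (use \<open>negligible N\<close> negligible_Int in auto)
    fix t assume "t \<in> {a<..<b} - N"
    then obtain D where "D \<le> 0" "(h has_real_derivative D) (at t)"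
      using deriv by blast
    then have "((\<lambda>t. h t - e * t) has_real_derivative D - e) (at t)"
      by (auto intro!: derivative_eq_intros)
    then show "\<exists>D<0. ((\<lambda>t. h t - e * t) has_real_derivative D) (at t)"
      using \<open>D \<le> 0\<close> \<open>e > 0\<close> by (intro exI[of _ "D - e"]) auto
  qed
  show ?thesis
  proof (rule field_le_epsilon)
    fix e :: real assume "e > 0"
    define c where "c = e / (b - a + 1)"
    have "c > 0" "c * (b - a + 1) = e"
      using \<open>e > 0\<close> \<open>a \<le> b\<close> by (simp_all add: c_def)
    have "h b - h a \<le> c * (b - a)"
      using tilted[OF \<open>c > 0\<close>] by (simp add: algebra_simps)
    also have "\<dots> \<le> c * (b - a + 1)"
      using \<open>c > 0\<close> by simp
    finally show "h b \<le> h a + e"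
      using \<open>c * (b - a + 1) = e\<close> by simp
  qed
qed

lemma has_real_derivative_imp_lipschitz_at:
  assumes "(k has_real_derivative D) (at z)"
  shows "\<forall>\<^sub>F y in nhds z. \<bar>k y - k z\<bar> \<le> (\<bar>D\<bar> + 1) * \<bar>y - z\<bar>"
proof -
  have "((\<lambda>y. (k y - k z) / (y - z)) \<longlongrightarrow> D) (at z)"
    using assms by (simp add: has_field_derivative_iff)
  then have "\<forall>\<^sub>F y in at z. dist ((k y - k z) / (y - z)) D < 1"
    by (rule tendstoD) simp
  then have "\<forall>\<^sub>F y in at z. \<bar>k y - k z\<bar> \<le> (\<bar>D\<bar> + 1) * \<bar>y - z\<bar>"
  proof (rule eventually_mono)
    fix y assume "dist ((k y - k z) / (y - z)) D < 1"
    then have "\<bar>(k y - k z) / (y - z)\<bar> \<le> \<bar>D\<bar> + 1"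
      unfolding dist_real_def by linarith
    then have "\<bar>k y - k z\<bar> / \<bar>y - z\<bar> \<le> \<bar>D\<bar> + 1"
      by simp
    then show "\<bar>k y - k z\<bar> \<le> (\<bar>D\<bar> + 1) * \<bar>y - z\<bar>"
      by (cases "y = z") (simp_all add: divide_le_eq)
  qed
  then show ?thesis
    by (simp add: eventually_nhds_conv_at)
qed

lemma locally_lipschitz_on_subset:
  "locally_lipschitz_on S f \<Longrightarrow> T \<subseteq> S \<Longrightarrow> locally_lipschitz_on T f"
  unfolding locally_lipschitz_on_def by (meson Int_mono lipschitz_on_subset order_refl subsetD)

lemma locally_lipschitz_on_imp_lipschitz_at:
  assumes "locally_lipschitz_on S f" and "x \<in> S"
  obtains L where "\<forall>\<^sub>F y in nhds x. y \<in> S \<longrightarrow> \<bar>f y - f x\<bar> \<le> L * \<bar>y - x\<bar>"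
proof -
  obtain e L where "e > 0" and L: "L-lipschitz_on (cball x e \<inter> S) f"
    using assms unfolding locally_lipschitz_on_def by blast
  have "\<forall>\<^sub>F y in nhds x. y \<in> ball x e"
    using \<open>e > 0\<close> by (rule eventually_nhds_ball)
  then have "\<forall>\<^sub>F y in nhds x. y \<in> S \<longrightarrow> \<bar>f y - f x\<bar> \<le> L * \<bar>y - x\<bar>"
    by (rule eventually_mono)
      (use lipschitz_onD[OF L] \<open>e > 0\<close> \<open>x \<in> S\<close> in \<open>auto simp: dist_real_def\<close>)
  then show thesis by (rule that)
qed

lemma abs_increment_le_if_ae_abs_deriv_le:
  fixes g G g' G' :: "real \<Rightarrow> real"
  assumes "a \<le> b" and cont: "continuous_on {a..b} g" and lip: "locally_lipschitz_on {a..b} g"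
    and "negligible N"
    and G: "\<And>t. t \<in> {a..b} \<Longrightarrow> (G has_real_derivative G' t) (at t)"
    and g: "\<And>t. t \<in> {a<..<b} - N \<Longrightarrow> (g has_real_derivative g' t) (at t)"
    and g'_le: "\<And>t. t \<in> {a<..<b} - N \<Longrightarrow> \<bar>g' t\<bar> \<le> G' t"
  shows "\<bar>g b - g a\<bar> \<le> G b - G a"
proof -
  have "s * (g b - g a) \<le> G b - G a" if "\<bar>s\<bar> = 1" for s
  proof -
    let ?h = "\<lambda>t. s * g t - G t"
    have "?h b \<le> ?h a"
    proof (rule nonincreasing_if_ae_deriv_nonpos[OF \<open>a \<le> b\<close> _ \<open>negligible N\<close>])
      have "continuous_on {a..b} G"
        using G by (meson DERIV_isCont continuous_at_imp_continuous_on)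
      then show "continuous_on {a..b} ?h"
        by (intro continuous_intros cont)
    next
      fix t assume t: "t \<in> {a<..<b} - N"
      have "(?h has_real_derivative s * g' t - G' t) (at t)"
        using g[OF t] G[of t] t by (auto intro!: derivative_eq_intros)
      moreover have "s * g' t \<le> G' t"
        using g'_le[OF t] \<open>\<bar>s\<bar> = 1\<close> by (metis abs_le_D1 abs_mult mult_1)
      ultimately show "\<exists>D\<le>0. (?h has_real_derivative D) (at t)"
        by (intro exI[of _ "s * g' t - G' t"]) simp
    next
      fix t assume t: "t \<in> {a<..<b} \<inter> N"
      then obtain L where "\<forall>\<^sub>F y in nhds t. y \<in> {a..b} \<longrightarrow> \<bar>g y - g t\<bar> \<le> L * \<bar>y - t\<bar>"
        using locally_lipschitz_on_imp_lipschitz_at[OF lip, of t] by auto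
      moreover have "\<forall>\<^sub>F y in nhds t. \<bar>G y - G t\<bar> \<le> (\<bar>G' t\<bar> + 1) * \<bar>y - t\<bar>"
        using t G[of t] by (intro has_real_derivative_imp_lipschitz_at) auto
      ultimately have "\<forall>\<^sub>F y in nhds t. y \<in> {a..b} \<longrightarrow>
          \<bar>?h y - ?h t\<bar> \<le> (L + \<bar>G' t\<bar> + 1) * \<bar>y - t\<bar>"
      proof eventually_elim
        case (elim y)
        have "\<bar>?h y - ?h t\<bar> = \<bar>s * (g y - g t) - (G y - G t)\<bar>"
          by (simp add: algebra_simps)
        also have "\<dots> \<le> \<bar>g y - g t\<bar> + \<bar>G y - G t\<bar>"
          using \<open>\<bar>s\<bar> = 1\<close> by (metis abs_mult abs_triangle_ineq4 mult_1)
        finally show ?case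
          using elim by (auto simp: algebra_simps)
      qed
      then show "\<exists>B. \<forall>\<^sub>F y in nhds t. y \<in> {a..b} \<longrightarrow> \<bar>?h y - ?h t\<bar> \<le> B * \<bar>y - t\<bar>" ..
    qed
    then show ?thesis
      by (simp add: algebra_simps)
  qed
  from this[of 1] this[of "-1"] show ?thesis
    by simp
qed

lemma abs_diff_le_abs_powr_diff:
  fixes f f' :: "real \<Rightarrow> real"
  assumes cont: "continuous_on {0<..1} f" and lip: "locally_lipschitz_on {0<..1} f"
    and "negligible N"
    and f': "\<And>t. t \<in> {0<..1} - N \<Longrightarrow> (f has_real_derivative f' t) (at t)"
    and bound: "\<And>t. t \<in> {0<..1} - N \<Longrightarrow> \<bar>t powr b * f' t\<bar> \<le> m"
    and "b < 1" and x: "x \<in> {0<..1}" and y: "y \<in> {0<..1}"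
  shows "\<bar>f y - f x\<bar> \<le> m * \<bar>y powr (1 - b) - x powr (1 - b)\<bar> / (1 - b)"
proof -
  have ordered: "\<bar>f v - f u\<bar> \<le> m * (v powr (1 - b) - u powr (1 - b)) / (1 - b)"
    if "0 < u" "u \<le> v" "v \<le> 1" for u v
  proof -
    have "\<bar>f v - f u\<bar> \<le> m * v powr (1 - b) / (1 - b) - m * u powr (1 - b) / (1 - b)"
    proof (rule abs_increment_le_if_ae_abs_deriv_le[OF \<open>u \<le> v\<close> _ _ \<open>negligible N\<close>])
      show "continuous_on {u..v} f" "locally_lipschitz_on {u..v} f"
        using that by (auto intro: continuous_on_subset[OF cont] locally_lipschitz_on_subset[OF lip])
    next
      fix t assume "t \<in> {u..v}"
      then have "t > 0" using that by auto
      have "((\<lambda>t. m * t powr (1 - b) / (1 - b)) has_real_derivative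
              m * ((1 - b) * t powr (1 - b - 1)) / (1 - b)) (at t)"
        using \<open>t > 0\<close> by (intro DERIV_cdivide DERIV_cmult has_real_derivative_powr) auto
      then show "((\<lambda>t. m * t powr (1 - b) / (1 - b)) has_real_derivative m * t powr (- b)) (at t)"
        using \<open>b < 1\<close> by simp
    next
      fix t assume t: "t \<in> {u<..<v} - N"
      then have t01: "t \<in> {0<..1} - N" using that by auto
      then show "(f has_real_derivative f' t) (at t)" by (rule f')
      have "\<bar>f' t\<bar> = t powr (- b) * \<bar>t powr b * f' t\<bar>"
        using t01 by (simp add: abs_mult powr_minus field_simps)
      also have "\<dots> \<le> m * t powr (- b)"
        using mult_right_mono[OF bound[OF t01], of "t powr (- b)"] by (simp add: mult.commute)
      finally show "\<bar>f' t\<bar> \<le> m * t powr (- b)" .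
    qed
    then show ?thesis
      by (simp add: diff_divide_distrib right_diff_distrib)
  qed
  show ?thesis
  proof (cases "x \<le> y")
    case True
    moreover have "x powr (1 - b) \<le> y powr (1 - b)"
      using True x \<open>b < 1\<close> by (intro powr_mono2) auto
    ultimately show ?thesis using ordered[of x y] x y by simp
  next
    case False
    moreover have "y powr (1 - b) \<le> x powr (1 - b)"
      using False x y \<open>b < 1\<close> by (intro powr_mono2) auto
    ultimately show ?thesis using ordered[of y x] x y by (simp add: abs_minus_commute)
  qed
qed

section \<open>Concavity of real powers\<close>

lemma powr_le_tangent:
  fixes t c a :: real
  assumes "0 < t" "0 < c" "0 < a" "a \<le> 1"
  shows "t powr a \<le> c powr a + a * c powr (a - 1) * (t - c)"
proof -
  have "t powr a * c powr (1 - a) \<le> a * t + (1 - a) * c"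
    using Youngs_inequality_0[of a "1 - a" t c] assms by simp
  then have "t powr a \<le> (a * t + (1 - a) * c) / c powr (1 - a)"
    using \<open>0 < c\<close> by (simp add: field_simps)
  also have "\<dots> = c powr a + a * c powr (a - 1) * (t - c)"
    using \<open>0 < c\<close> by (simp add: field_simps powr_diff powr_add)
  finally show ?thesis .
qed

lemma abs_powr_diff_le:
  fixes x p c :: real
  assumes "0 < x" "0 < p" "0 < c" "c \<le> 1"
  shows "\<bar>x powr c - p powr c\<bar> \<le> p powr (c - 1) * \<bar>x - p\<bar>"
proof (cases "p \<le> x")
  case True
  have "x powr c \<le> p powr c + c * p powr (c - 1) * (x - p)"
    using powr_le_tangent[of x p c] assms by simp
  also have "\<dots> \<le> p powr c + p powr (c - 1) * (x - p)"
    using True assms by (intro add_left_mono mult_right_mono) auto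
  finally show ?thesis
    using True powr_mono2[of c p x] assms by auto
next
  case False
  have "x * p powr (c - 1) \<le> x * x powr (c - 1)"
    using False assms by (intro mult_left_mono powr_mono2') auto
  also have "\<dots> = x powr c"
    using \<open>0 < x\<close> by (simp add: powr_diff)
  moreover have "p powr (c - 1) * (p - x) = p powr c - x * p powr (c - 1)"
    using \<open>0 < p\<close> by (simp add: powr_diff right_diff_distrib)
  ultimately have "p powr c - x powr c \<le> p powr (c - 1) * (p - x)"
    by linarith
  then show ?thesis
    using False powr_mono2[of c x p] assms by auto
qed

lemma (in prob_space) expectation_powr_le:
  fixes Z :: "'a \<Rightarrow> real"
  assumes "integrable M Z" and pos: "AE x in M. 0 < Z x" and "0 < a" "a \<le> 1"
    and "0 < c" and "expectation Z \<le> c"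
  shows "expectation (\<lambda>x. Z x powr a) \<le> c powr a"
proof -
  let ?tangent = "\<lambda>x. c powr a + a * c powr (a - 1) * (Z x - c)"
  have "expectation (\<lambda>x. Z x powr a) \<le> expectation ?tangent"
  proof (rule integral_mono_AE')
    show "integrable M ?tangent"
      using \<open>integrable M Z\<close> by simp
    show "AE x in M. Z x powr a \<le> ?tangent x"
      using pos by eventually_elim (rule powr_le_tangent; use assms in simp)
    then show "AE x in M. 0 \<le> ?tangent x"
      by eventually_elim (rule order_trans[OF powr_ge_zero])
  qed
  also have "expectation ?tangent = c powr a + a * c powr (a - 1) * (expectation Z - c)"
    using \<open>integrable M Z\<close> prob_space by (simp add: Bochner_Integration.integral_add)
  also have "\<dots> \<le> c powr a"
    using assms by (simp add: mult_nonneg_nonpos)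
  finally show ?thesis .
qed

lemma (in prob_space) expectation_abs_le_sqrt_second_moment:
  fixes X :: "'a \<Rightarrow> real"
  assumes "integrable M X" and "integrable M (\<lambda>x. (X x)\<^sup>2)"
  shows "expectation (\<lambda>x. \<bar>X x\<bar>) \<le> sqrt (expectation (\<lambda>x. (X x)\<^sup>2))"
proof (rule real_le_rsqrt)
  show "(expectation (\<lambda>x. \<bar>X x\<bar>))\<^sup>2 \<le> expectation (\<lambda>x. (X x)\<^sup>2)"
    using jensens_inequality[where I = UNIV and X = "\<lambda>x. \<bar>X x\<bar>" and q = power2] assms convex_power2
    by simp
qed

section \<open>Moments of the binomial distribution\<close>

lemma expectation_binomial_pmf_Suc:
  fixes h :: "nat \<Rightarrow> real"
  assumes p: "p \<in> {0..1}"
  shows "measure_pmf.expectation (binomial_pmf (Suc n) p) h =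
           p * measure_pmf.expectation (binomial_pmf n p) (\<lambda>k. h (Suc k))
         + (1 - p) * measure_pmf.expectation (binomial_pmf n p) h"
proof -
  have "binomial_pmf (Suc n) p =
      bernoulli_pmf p \<bind> (\<lambda>b. map_pmf (\<lambda>k. (if b then 1 else 0) + k) (binomial_pmf n p))"
    unfolding binomial_pmf_Suc[OF p] map_pmf_def by simp
  also have "measure_pmf.expectation \<dots> h =
      (\<Sum>b\<in>UNIV. pmf (bernoulli_pmf p) b *\<^sub>R
         measure_pmf.expectation (map_pmf (\<lambda>k. (if b then 1 else 0) + k) (binomial_pmf n p)) h)"
    by (rule pmf_expectation_bind) (use p finite_set_pmf_binomial_pmf[OF p, of n] in auto)
  finally show ?thesis
    using p by (simp add: UNIV_bool)
qed

lemma expectation_binomial_pmf_real: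
  assumes p: "p \<in> {0..1}"
  shows "measure_pmf.expectation (binomial_pmf n p) real = real n * p"
proof (induction n)
  case 0
  then show ?case using p by (simp add: binomial_pmf_0)
next
  case (Suc n)
  then show ?case
    using p by (simp add: expectation_binomial_pmf_Suc integral_add algebra_simps)
qed

lemma expectation_binomial_pmf_square:
  assumes p: "p \<in> {0..1}"
  shows "measure_pmf.expectation (binomial_pmf n p) (\<lambda>k. (real k)\<^sup>2)
           = real n * p * (1 - p) + (real n * p)\<^sup>2"
proof (induction n)
  case 0
  then show ?case using p by (simp add: binomial_pmf_0)
next
  case (Suc n)
  have "measure_pmf.expectation (binomial_pmf n p) (\<lambda>k. (real (Suc k))\<^sup>2)
      = measure_pmf.expectation (binomial_pmf n p) (\<lambda>k. (real k)\<^sup>2 + 2 * real k + 1)"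
    by (simp add: power2_eq_square algebra_simps)
  also have "\<dots> = measure_pmf.expectation (binomial_pmf n p) (\<lambda>k. (real k)\<^sup>2) + 2 * (real n * p) + 1"
    using p by (simp add: integral_add expectation_binomial_pmf_real[OF p, unfolded comp_def])
  finally show ?case
    using Suc p by (simp add: expectation_binomial_pmf_Suc algebra_simps power2_eq_square)
qed

lemma expectation_binomial_pmf_centered_square:
  assumes p: "p \<in> {0..1}"
  shows "measure_pmf.expectation (binomial_pmf n p) (\<lambda>k. (real k - real n * p)\<^sup>2) = real n * p * (1 - p)"
proof -
  let ?E = "measure_pmf.expectation (binomial_pmf n p)" and ?c = "real n * p"
  have "(\<lambda>k. (real k - ?c)\<^sup>2) = (\<lambda>k. (real k)\<^sup>2 - 2 * ?c * real k + ?c\<^sup>2)"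
    by (simp add: power2_eq_square algebra_simps)
  then have "?E (\<lambda>k. (real k - ?c)\<^sup>2) = ?E (\<lambda>k. (real k)\<^sup>2) - 2 * ?c * ?E real + ?c\<^sup>2"
    using p by (simp add: integral_add integral_diff comp_def)
  then show ?thesis
    using expectation_binomial_pmf_square[OF p, of n] expectation_binomial_pmf_real[OF p, of n]
    by (simp add: power2_eq_square algebra_simps)
qed

lemma expectation_binomial_pmf_inverse_Suc:
  assumes p: "0 < p" "p \<le> 1"
  shows "measure_pmf.expectation (binomial_pmf n p) (\<lambda>k. 1 / (real k + 1))
           = (1 - (1 - p) ^ Suc n) / (p * (real n + 1))"
proof -
  define g where "g j = real (Suc n choose j) * p ^ j * (1 - p) ^ (Suc n - j)" for j
  have "(real (n choose k) * p ^ k * (1 - p) ^ (n - k)) *\<^sub>R (1 / (real k + 1))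
        = g (Suc k) / (p * (real n + 1))" for k
  proof -
    have "real (n choose k) * (real n + 1) = real (Suc n choose Suc k) * (real k + 1)"
      using Suc_times_binomial_eq[of n k] by (metis of_nat_Suc of_nat_mult add.commute mult.commute)
    then have "g (Suc k) = real (n choose k) * (real n + 1) / (real k + 1) * p ^ Suc k * (1 - p) ^ (n - k)"
      by (simp add: g_def field_simps del: binomial_Suc_Suc)
    moreover have "p + p * real n > 0"
      using p by (simp add: add_pos_nonneg)
    ultimately show ?thesis
      using p by (simp add: field_simps)
  qed
  then have "measure_pmf.expectation (binomial_pmf n p) (\<lambda>k. 1 / (real k + 1))
        = (\<Sum>k\<le>n. g (Suc k)) / (p * (real n + 1))"
    using p by (simp add: expectation_binomial_pmf' sum_divide_distrib)
  also have "(\<Sum>k\<le>n. g (Suc k)) = (\<Sum>j\<le>Suc n. g j) - g 0"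
    unfolding sum.atMost_Suc_shift by simp
  also have "(\<Sum>j\<le>Suc n. g j) = 1"
    using binomial_ring[of p "1 - p" "Suc n"] by (simp add: g_def)
  finally show ?thesis
    by (simp add: g_def)
qed

lemma expectation_binomial_pmf_powr_neg_le:
  assumes "0 < p" "p \<le> 1" "0 < a" "a \<le> 1"
  shows "measure_pmf.expectation (binomial_pmf n p) (\<lambda>k. (2 * real k + 1) powr (- a))
           \<le> (min 1 (1 / (p * (real n + 1)))) powr a"
proof -
  let ?E = "measure_pmf.expectation (binomial_pmf n p)" and ?Z = "\<lambda>k. 1 / (2 * real k + 1)"
  have p01: "p \<in> {0..1}" using assms by simp
  have "?E ?Z \<le> ?E (\<lambda>k. 1 / (real k + 1))"
    using p01 by (intro integral_mono) (auto intro: divide_left_mono)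
  also have "\<dots> \<le> 1 / (p * (real n + 1))"
    using assms by (simp add: expectation_binomial_pmf_inverse_Suc divide_right_mono)
  finally have "?E ?Z \<le> 1 / (p * (real n + 1))" .
  moreover have "?E ?Z \<le> ?E (\<lambda>k. 1)"
    using p01 by (intro integral_mono) auto
  ultimately have "?E ?Z \<le> min 1 (1 / (p * (real n + 1)))"
    by simp
  then have "?E (\<lambda>k. ?Z k powr a) \<le> (min 1 (1 / (p * (real n + 1)))) powr a"
    using assms p01 by (intro measure_pmf.expectation_powr_le) auto
  then show ?thesis
    by (simp add: powr_minus_divide powr_divide)
qed

lemma expectation_binomial_pmf_abs_diff_le:
  assumes p: "p \<in> {0..1}"
  shows "measure_pmf.expectation (binomial_pmf n p) (\<lambda>k. \<bar>(2 * real k + 1) / (2 * real n + 1) - p\<bar>)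
           \<le> (2 * sqrt (real n * p) + 1) / (2 * real n + 1)"
proof -
  let ?E = "measure_pmf.expectation (binomial_pmf n p)"
  have "\<bar>(2 * real k + 1) / (2 * real n + 1) - p\<bar> \<le> (2 * \<bar>real k - real n * p\<bar> + 1) / (2 * real n + 1)"
    for k
  proof -
    have eq: "(2 * real k + 1) / (2 * real n + 1) - p
        = (2 * (real k - real n * p) + (1 - p)) / (2 * real n + 1)"
      by (simp add: field_simps)
    have "\<bar>2 * (real k - real n * p) + (1 - p)\<bar> \<le> 2 * \<bar>real k - real n * p\<bar> + 1"
      using p abs_triangle_ineq[of "2 * (real k - real n * p)" "1 - p"] by (simp only: abs_mult) simp
    then have "\<bar>2 * (real k - real n * p) + (1 - p)\<bar> / (2 * real n + 1)
        \<le> (2 * \<bar>real k - real n * p\<bar> + 1) / (2 * real n + 1)"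
      by (rule divide_right_mono) simp
    moreover have "\<bar>2 * real n + 1\<bar> = 2 * real n + 1"
      by simp
    ultimately show ?thesis
      unfolding eq abs_divide by simp
  qed
  then have "?E (\<lambda>k. \<bar>(2 * real k + 1) / (2 * real n + 1) - p\<bar>)
      \<le> ?E (\<lambda>k. (2 * \<bar>real k - real n * p\<bar> + 1) / (2 * real n + 1))"
    using p by (intro integral_mono) auto
  also have "\<dots> = (2 * ?E (\<lambda>k. \<bar>real k - real n * p\<bar>) + 1) / (2 * real n + 1)"
    using p by (simp add: integral_add)
  also have "\<dots> \<le> (2 * sqrt (real n * p) + 1) / (2 * real n + 1)"
  proof -
    have "?E (\<lambda>k. \<bar>real k - real n * p\<bar>) \<le> sqrt (?E (\<lambda>k. (real k - real n * p)\<^sup>2))"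
      using p by (intro measure_pmf.expectation_abs_le_sqrt_second_moment) auto
    also have "\<dots> = sqrt (real n * p * (1 - p))"
      using p by (simp add: expectation_binomial_pmf_centered_square)
    also have "\<dots> \<le> sqrt (real n * p)"
      using p by (intro real_sqrt_le_mono) (simp add: mult_left_le)
    finally show ?thesis
      by (intro divide_right_mono) auto
  qed
  finally show ?thesis .
qed

lemma expectation_binomial_pmf_abs_powr_diff_le_sqrt:
  assumes p: "0 < p" "p \<le> 1" and c: "0 < c" "c \<le> 1"
  shows "measure_pmf.expectation (binomial_pmf n p)
           (\<lambda>k. \<bar>((2 * real k + 1) / (2 * real n + 1)) powr c - p powr c\<bar>)
         \<le> p powr (c - 1) * ((2 * sqrt (real n * p) + 1) / (2 * real n + 1))"
proof -
  let ?Y = "\<lambda>k. (2 * real k + 1) / (2 * real n + 1)"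
  have "measure_pmf.expectation (binomial_pmf n p) (\<lambda>k. \<bar>?Y k powr c - p powr c\<bar>)
      \<le> measure_pmf.expectation (binomial_pmf n p) (\<lambda>k. p powr (c - 1) * \<bar>?Y k - p\<bar>)"
    using p c by (intro integral_mono abs_powr_diff_le) (auto simp: add_pos_nonneg)
  also have "\<dots> \<le> p powr (c - 1) * ((2 * sqrt (real n * p) + 1) / (2 * real n + 1))"
    unfolding integral_mult_right_zero using p
    by (intro mult_left_mono expectation_binomial_pmf_abs_diff_le) auto
  finally show ?thesis .
qed

lemma expectation_binomial_pmf_abs_powr_diff_le:
  assumes "n \<ge> 1" and p: "0 < p" "p < 1" and b: "0 < b" "b < 1"
  shows "measure_pmf.expectation (binomial_pmf n p)
           (\<lambda>k. \<bar>((2 * real k + 1) / (2 * real n + 1)) powr (1 - b) - p powr (1 - b)\<bar>)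
         \<le> (p powr (- b / 2) + p powr (1 / 2 - b)) * real n powr (- 1 / 2)"
proof -
  let ?E = "measure_pmf.expectation (binomial_pmf n p)"
  let ?Y = "\<lambda>k. (2 * real k + 1) / (2 * real n + 1)"
  define r where "r = p powr (- b / 2) * real n powr (- 1 / 2)"
  define q where "q = p powr (1 / 2 - b) * real n powr (- 1 / 2)"
  have n: "real n > 0"
    using assms by auto
  have "?E (\<lambda>k. \<bar>?Y k powr (1 - b) - p powr (1 - b)\<bar>) \<le> ?E (\<lambda>k. 1)"
  proof (rule integral_mono_AE)
    show "AE k in binomial_pmf n p. \<bar>?Y k powr (1 - b) - p powr (1 - b)\<bar> \<le> 1"
    proof (rule AE_pmfI)
      fix k assume "k \<in> set_pmf (binomial_pmf n p)"
      then have "?Y k powr (1 - b) \<le> 1" "p powr (1 - b) \<le> 1"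
        using p b by (auto intro: powr_le1)
      then show "\<bar>?Y k powr (1 - b) - p powr (1 - b)\<bar> \<le> 1"
        using powr_ge_zero[of "?Y k" "1 - b"] powr_ge_zero[of p "1 - b"] by linarith
    qed
  qed (use p in auto)
  then have trivial: "?E (\<lambda>k. \<bar>?Y k powr (1 - b) - p powr (1 - b)\<bar>) \<le> 1"
    by simp
  have "?E (\<lambda>k. \<bar>?Y k powr (1 - b) - p powr (1 - b)\<bar>)
      \<le> p powr (- b) * ((2 * sqrt (real n * p) + 1) / (2 * real n + 1))"
    using expectation_binomial_pmf_abs_powr_diff_le_sqrt[of p "1 - b" n] p b by simp
  also have "\<dots> \<le> p powr (- b) * (sqrt (real n * p) / real n + 1 / real n)"
    using n p by (intro mult_left_mono) (auto simp: field_simps)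
  also have "\<dots> = q + r * r"
    using p n by (simp add: q_def r_def field_simps real_sqrt_mult powr_half_sqrt[symmetric]
        powr_add[symmetric] powr_minus_divide)
  finally have "?E (\<lambda>k. \<bar>?Y k powr (1 - b) - p powr (1 - b)\<bar>) \<le> q + r * r" .
  moreover have "q \<ge> 0" "r \<ge> 0"
    by (simp_all add: q_def r_def)
  moreover have "r * r \<le> r" if "r \<le> 1"
    using that \<open>r \<ge> 0\<close> by (simp add: mult_left_le_one_le)
  ultimately have "?E (\<lambda>k. \<bar>?Y k powr (1 - b) - p powr (1 - b)\<bar>) \<le> r + q"
    using trivial by (cases "r \<le> 1") linarith+
  then show ?thesis
    by (simp add: r_def q_def algebra_simps)
qed

lemma expectation_binomial_pmf_abs_fun_diff_le:
  fixes f f' :: "real \<Rightarrow> real"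
  assumes "n \<ge> 1" and p: "0 < p" "p < 1" and b: "0 < b" "b < 1"
    and cont: "continuous_on {0<..1} f" and lip: "locally_lipschitz_on {0<..1} f"
    and N: "negligible N"
    and f': "\<And>t. t \<in> {0<..1} - N \<Longrightarrow> (f has_real_derivative f' t) (at t)"
    and bound: "\<And>t. t \<in> {0<..1} - N \<Longrightarrow> \<bar>t powr b * f' t\<bar> \<le> m"
    and "m \<ge> 0"
  shows "measure_pmf.expectation (binomial_pmf n p) (\<lambda>k. \<bar>f ((2 * real k + 1) / (2 * real n + 1)) - f p\<bar>)
           \<le> m * ((p powr (- b / 2) + p powr (1 / 2 - b)) * real n powr (- 1 / 2) / (1 - b))"
proof -
  let ?E = "measure_pmf.expectation (binomial_pmf n p)"
  let ?Y = "\<lambda>k. (2 * real k + 1) / (2 * real n + 1)"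
  have "?E (\<lambda>k. \<bar>f (?Y k) - f p\<bar>) \<le> ?E (\<lambda>k. m / (1 - b) * \<bar>?Y k powr (1 - b) - p powr (1 - b)\<bar>)"
  proof (rule integral_mono_AE)
    show "AE k in binomial_pmf n p. \<bar>f (?Y k) - f p\<bar> \<le> m / (1 - b) * \<bar>?Y k powr (1 - b) - p powr (1 - b)\<bar>"
    proof (rule AE_pmfI)
      fix k assume "k \<in> set_pmf (binomial_pmf n p)"
      then have "?Y k \<in> {0<..1}"
        using p by (auto simp: add_pos_nonneg)
      then show "\<bar>f (?Y k) - f p\<bar> \<le> m / (1 - b) * \<bar>?Y k powr (1 - b) - p powr (1 - b)\<bar>"
        using abs_diff_le_abs_powr_diff[OF cont lip N f' bound \<open>b < 1\<close>, of p] p by simp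
    qed
  qed (use p in auto)
  also have "\<dots> = m / (1 - b) * ?E (\<lambda>k. \<bar>?Y k powr (1 - b) - p powr (1 - b)\<bar>)"
    by (rule integral_mult_right_zero)
  also have "\<dots> \<le> m / (1 - b) * ((p powr (- b / 2) + p powr (1 / 2 - b)) * real n powr (- 1 / 2))"
    using expectation_binomial_pmf_abs_powr_diff_le[OF assms(1-5)] \<open>m \<ge> 0\<close> b
    by (intro mult_left_mono) auto
  finally show ?thesis
    by simp
qed

lemma AE_lebesgue_on_imp_negligible_exception:
  assumes "AE x in lebesgue_on S. P x" and "S \<in> sets lebesgue"
  obtains N where "negligible N" and "\<And>x. x \<in> S - N \<Longrightarrow> P x"
proof -
  have "AE x in lebesgue. x \<in> S \<longrightarrow> P x"
    using assms by (subst (asm) AE_restrict_space_iff) auto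
  then obtain N where "{x \<in> space lebesgue. \<not> (x \<in> S \<longrightarrow> P x)} \<subseteq> N"
      "emeasure lebesgue N = 0" "N \<in> sets lebesgue"
    by (rule AE_E)
  then show thesis
    by (intro that[of N]) (auto simp: negligible_iff_emeasure0)
qed

lemma expectation_binomial_pmf_abs_fun_diff_le_esssup:
  fixes f f' :: "real \<Rightarrow> real"
  assumes "n \<ge> 1" and p: "0 < p" "p < 1" and b: "0 < b" "b < 1"
    and cont: "continuous_on {0<..1} f" and lip: "locally_lipschitz_on {0<..1} f"
    and deriv: "AE x in lebesgue_on {0<..1}. (f has_real_derivative f' x) (at x)"
  shows "ereal (measure_pmf.expectation (binomial_pmf n p)
                 (\<lambda>k. \<bar>f ((2 * real k + 1) / (2 * real n + 1)) - f p\<bar>))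
         \<le> esssup (lebesgue_on {0<..1}) (\<lambda>x. ereal \<bar>x powr b * f' x\<bar>)
            * ereal ((p powr (- b / 2) + p powr (1 / 2 - b)) * real n powr (- 1 / 2) / (1 - b))"
proof -
  define M where "M = esssup (lebesgue_on {0<..1}) (\<lambda>x. ereal \<bar>x powr b * f' x\<bar>)"
  define R where "R = (p powr (- b / 2) + p powr (1 / 2 - b)) * real n powr (- 1 / 2) / (1 - b)"
  have "AE x in lebesgue_on {0<..1}. (f has_real_derivative f' x) (at x) \<and> ereal \<bar>x powr b * f' x\<bar> \<le> M"
    using deriv esssup_AE[of "\<lambda>x. ereal \<bar>x powr b * f' x\<bar>" "lebesgue_on {0<..1}"]
    unfolding M_def by eventually_elim auto
  then obtain N where N: "negligible N"
    and good: "\<And>x. x \<in> {0<..1} - N \<Longrightarrow> (f has_real_derivative f' x) (at x) \<and> ereal \<bar>x powr b * f' x\<bar> \<le> M"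
    by (rule AE_lebesgue_on_imp_negligible_exception) auto
  obtain x0 where x0: "x0 \<in> {0<..1} - N"
  proof -
    have "\<not> {0<..<1::real} \<subseteq> N"
      using negligible_subset[OF N] negligible_interval(2)[of "0::real" 1] by auto
    then obtain x where "x \<in> {0<..<1}" "x \<notin> N"
      by blast
    then show thesis
      using that[of x] by auto
  qed
  have "R > 0"
    using assms by (simp add: R_def add_pos_pos)
  have "ereal (measure_pmf.expectation (binomial_pmf n p)
                 (\<lambda>k. \<bar>f ((2 * real k + 1) / (2 * real n + 1)) - f p\<bar>)) \<le> M * ereal R"
  proof (cases M)
    case (real m)
    have "m \<ge> 0"
      using good[OF x0] real by auto
    with real show ?thesis
      using expectation_binomial_pmf_abs_fun_diff_le[OF assms(1-7) N, of f' m] good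
      by (auto simp: R_def)
  next
    case PInf
    then show ?thesis
      using \<open>R > 0\<close> by simp
  next
    case MInf
    then show ?thesis
      using good[OF x0] by simp
  qed
  then show ?thesis
    unfolding M_def R_def .
qed

theorem lemma8p2:
  fixes n :: nat and p :: real
  assumes "n \<ge> 1" and "0 < p" and "p < 1"
  shows
   "(\<forall>a::real. 0 < a \<and> a \<le> 1 \<longrightarrow>
       measure_pmf.expectation (binomial_pmf n p) (\<lambda>k. (2 * real k + 1) powr (-a))
         \<le> (min 1 (1 / (p * (real n + 1)))) powr a)
    \<and>
    (\<forall>(f::real \<Rightarrow> real) (f'::real \<Rightarrow> real) (b::real).
       continuous_on {0<..1} f \<and> locally_lipschitz_on {0<..1} f \<and>
       f' \<in> borel_measurable (lebesgue_on {0<..1}) \<and>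
       (AE x in lebesgue_on {0<..1}. (f has_real_derivative f' x) (at x)) \<and>
       0 < b \<and> b < 1 \<longrightarrow>
       ereal (measure_pmf.expectation (binomial_pmf n p)
                (\<lambda>k. \<bar>f ((2 * real k + 1) / (2 * real n + 1)) - f p\<bar>))
         \<le> esssup (lebesgue_on {0<..1}) (\<lambda>x. ereal \<bar>x powr b * f' x\<bar>)
            * ereal ((p powr (-b/2) + p powr (1/2 - b)) * real n powr (-1/2) / (1 - b)))"
proof (intro conjI allI impI)
  fix a :: real
  assume "0 < a \<and> a \<le> 1"
  with assms show "measure_pmf.expectation (binomial_pmf n p) (\<lambda>k. (2 * real k + 1) powr (-a))
      \<le> (min 1 (1 / (p * (real n + 1)))) powr a"
    by (intro expectation_binomial_pmf_powr_neg_le) auto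
next
  fix f f' :: "real \<Rightarrow> real" and b :: real
  assume "continuous_on {0<..1} f \<and> locally_lipschitz_on {0<..1} f \<and>
       f' \<in> borel_measurable (lebesgue_on {0<..1}) \<and>
       (AE x in lebesgue_on {0<..1}. (f has_real_derivative f' x) (at x)) \<and> 0 < b \<and> b < 1"
  with assms show "ereal (measure_pmf.expectation (binomial_pmf n p)
                (\<lambda>k. \<bar>f ((2 * real k + 1) / (2 * real n + 1)) - f p\<bar>))
         \<le> esssup (lebesgue_on {0<..1}) (\<lambda>x. ereal \<bar>x powr b * f' x\<bar>)
            * ereal ((p powr (-b/2) + p powr (1/2 - b)) * real n powr (-1/2) / (1 - b))"
    by (intro expectation_binomial_pmf_abs_fun_diff_le_esssup) auto
qed

end
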